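(* If $n\ge 3t+1$, then in every execution of COOL there is a value $\boldsymbol M\ne\phi$ such that, at the end of Phase 3, the updated message $\boldsymbol w^{(i)}$ of every honest processor $i$ belongs to $\{\boldsymbol M,\phi\}$; that is, at most one group of honest processors holds a common non-empty updated message, and all other honest processors hold the empty updated message $\phi$.
   Context: Setting. $n$ processors indexed by $[1:n]$, pairwise joined by reliable private synchronous channels; recipients know senders. At most $t$ processors are dishonest, controlled by a Byzantine adversary of unbounded computational power knowing all inputs, who may make them deviate arbitrarily (missing values are replaced by a fixed default); the others are honest. Processor $i$ holds an $\ell$-bit initial message $\boldsymbol w_i$. $\phi$ is a default value different from every $\ell$-bit message. Logarithms are base 2. Code. $k=\lfloor t/5\rfloor+1$, $c=\lceil \max\{\ell,(t/5+1)\log(n+1)\}/k\rceil$. Messages are zero-padded to $kc$ bits and viewed in $GF(2^c)^k$. Integers in $[1:n]$ are identified with distinct nonzero elements of $GF(2^c)$; $\boldsymbol h_i\in GF(2^c)^k$ has entries $h_{i,j}=\prod_{p\in[1:k],\,p\ne j}\frac{i-p}{j-p}$ (field arithmetic). COOL (honest processor $i$). Initialization: updated message $\boldsymbol w^{(i)}:=\boldsymbol w_i$, $y^{(i)}_j:=\boldsymbol h_j^{\mathsf T}\boldsymbol w_i$ for $j\in[1:n]$, $u_i(i):=1$. Phase 1. (a) Send $(y^{(i)}_j,y^{(i)}_i)$ to each $j\ne i$. (b) For $j\ne i$, link indicator $u_i(j):=1$ if the pair received from $j$ equals $(y^{(i)}_i,y^{(i)}_j)$, else $0$. Success indicator $s_i:=1$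 if $\sum_{j=1}^n u_i(j)\ge n-t$; otherwise $s_i:=0$ and $\boldsymbol w^{(i)}:=\phi$. (c) Send $s_i$ to all; each processor records the indicator received from each $j$ (own for itself) and forms $\mathcal S_1=\{j:s_j=1\}$, $\mathcal S_0=\{j:s_j=0\}$ (views may differ). Phase 2. If $s_i=1$: set $u_i(j):=0$ for all $j\in\mathcal S_0$; if now $\sum_j u_i(j)<n-t$, set $s_i:=0$, $\boldsymbol w^{(i)}:=\phi$, and send $s_i=0$ to all. Everyone overwrites recorded indicators with newly received ones and recomputes $\mathcal S_0,\mathcal S_1$. Phase 3. Repeat Phase 2 once more. Vote $v_i:=1$ if the recorded indicators satisfy $\sum_j s_j\ge 2t+1$, else $0$. Run on the votes a deterministic error-free binary Byzantine agreement protocol for $t<n/3$. If the decision is $0$: set $\boldsymbol w^{(i)}:=\phi$, output $\phi$, stop. Phase 4 (decision 1). If $s_i=0$: replace $y^{(i)}_i$ by the most frequent first component of the Phase-1 pairs received from $j\in\mathcal S_1$; send it to each $j\in\mathcal S_0\setminus\{i\}$; decode from $z_1,\dots,z_n$ ($z_i=y^{(i)}_i$; Phase-4 values for $j\in\mathcal S_0$; second components of Phase-1 pairs for $j\in\mathcal S_1$) a message $\boldsymbol x$ with $\boldsymbol h_j^{\mathsf T}\boldsymbol x=z_j$ for at least $n-t$ indices, and set $\boldsymbol w^{(i)}:=\boldsymbol x$. If $s_i=1$ keep $\boldsymbol w^{(i)}$. Output $\boldsymbol w^{(i)}$. *)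

theory Defs
  imports Complex_Main
begin

text \<open>Parameters of the code.  Processors are indexed by 1..n; field elements of
  GF(2^c) are modelled by an arbitrary finite field type of cardinality 2^c.\<close>

definition cool_k :: "nat \<Rightarrow> nat" where
  "cool_k t = t div 5 + 1"

definition cool_c :: "nat \<Rightarrow> nat \<Rightarrow> nat \<Rightarrow> nat" where
  "cool_c n t l = nat \<lceil>max (real l) ((real t / 5 + 1) * log 2 (real (n + 1))) / real (cool_k t)\<rceil>"

text \<open>Entries h_{i,j} of the coding vectors; pt identifies integers with field elements.\<close>
definition hcoef :: "(nat \<Rightarrow> 'f::field) \<Rightarrow> nat \<Rightarrow> nat \<Rightarrow> nat \<Rightarrow> 'f" where
  "hcoef pt k i j = (\<Prod>p\<in>{1..k} - {j}. (pt i - pt p) / (pt j - pt p))"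

text \<open>Zero-padding an l-bit message to k*c bits and viewing it in GF(2^c)^k,
  via a bijection beta between c-bit strings and field elements (q-th coordinate, q in 1..k).\<close>
definition encode :: "(bool list \<Rightarrow> 'f) \<Rightarrow> nat \<Rightarrow> nat \<Rightarrow> nat \<Rightarrow> bool list \<Rightarrow> nat \<Rightarrow> 'f" where
  "encode beta k c l w q = beta (take c (drop ((q - 1) * c) (w @ replicate (k * c - l) False)))"

definition ycode :: "(nat \<Rightarrow> 'f::field) \<Rightarrow> (bool list \<Rightarrow> 'f) \<Rightarrow> nat \<Rightarrow> nat \<Rightarrow> nat \<Rightarrow> bool list \<Rightarrow> nat \<Rightarrow> 'f" where
  "ycode pt beta k c l w j = (\<Sum>q=1..k. hcoef pt k j q * encode beta k c l w q)"

text \<open>Y: coding function (message, index) to symbol; D: dishonest set; win: initial messages;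
  adv1 j i: Phase-1 pair sent by dishonest j to i; advS1 j i: Phase-1(c) indicator sent by
  dishonest j to i; adversarial values in Phases 2/3 are optional (None = nothing sent).\<close>

definition p1_pair :: "(bool list \<Rightarrow> nat \<Rightarrow> 'f) \<Rightarrow> nat set \<Rightarrow> (nat \<Rightarrow> bool list)
    \<Rightarrow> (nat \<Rightarrow> nat \<Rightarrow> 'f \<times> 'f) \<Rightarrow> nat \<Rightarrow> nat \<Rightarrow> 'f \<times> 'f" where
  "p1_pair Y D win adv1 j i = (if j \<in> D then adv1 j i else (Y (win j) i, Y (win j) j))"

definition link1 :: "(bool list \<Rightarrow> nat \<Rightarrow> 'f) \<Rightarrow> nat set \<Rightarrow> (nat \<Rightarrow> bool list)
    \<Rightarrow> (nat \<Rightarrow> nat \<Rightarrow> 'f \<times> 'f) \<Rightarrow> nat \<Rightarrow> nat \<Rightarrow> bool" where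
  "link1 Y D win adv1 i j = (j = i \<or> p1_pair Y D win adv1 j i = (Y (win i) i, Y (win i) j))"

definition succ1 :: "nat \<Rightarrow> nat \<Rightarrow> (bool list \<Rightarrow> nat \<Rightarrow> 'f) \<Rightarrow> nat set \<Rightarrow> (nat \<Rightarrow> bool list)
    \<Rightarrow> (nat \<Rightarrow> nat \<Rightarrow> 'f \<times> 'f) \<Rightarrow> nat \<Rightarrow> bool" where
  "succ1 n t Y D win adv1 i = (n - t \<le> card {j \<in> {1..n}. link1 Y D win adv1 i j})"

definition rec1 :: "nat \<Rightarrow> nat \<Rightarrow> (bool list \<Rightarrow> nat \<Rightarrow> 'f) \<Rightarrow> nat set \<Rightarrow> (nat \<Rightarrow> bool list)
    \<Rightarrow> (nat \<Rightarrow> nat \<Rightarrow> 'f \<times> 'f) \<Rightarrow> (nat \<Rightarrow> nat \<Rightarrow> bool) \<Rightarrow> nat \<Rightarrow> nat \<Rightarrow> bool" where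
  "rec1 n t Y D win adv1 advS1 i j =
     (if j = i then succ1 n t Y D win adv1 i
      else if j \<in> D then advS1 j i else succ1 n t Y D win adv1 j)"

type_synonym cool_state = "(nat \<Rightarrow> bool) \<times> (nat \<Rightarrow> nat \<Rightarrow> bool) \<times> (nat \<Rightarrow> nat \<Rightarrow> bool)"
  (* success indicators s, link indicators u, recorded indicators R (R i j = view of i about j) *)

text \<open>One execution of Phase 2 (honest processors follow the protocol; honest j sends 0
  exactly when it switches its indicator to 0; advS j i is what dishonest j sends to i).\<close>
definition phase2_step :: "nat \<Rightarrow> nat \<Rightarrow> nat set \<Rightarrow> (nat \<Rightarrow> nat \<Rightarrow> bool option)
    \<Rightarrow> cool_state \<Rightarrow> cool_state" where
  "phase2_step n t D advS st =
    (case st of (s, u, R) \<Rightarrow>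
      let u' = (\<lambda>i j. if s i then u i j \<and> R i j else u i j);
          s' = (\<lambda>i. s i \<and> n - t \<le> card {j \<in> {1..n}. u' i j});
          msg = (\<lambda>j i. if j \<in> D then advS j i
                       else if s j \<and> \<not> s' j then Some False else None);
          R' = (\<lambda>i j. if j = i then s' i
                      else (case msg j i of Some b \<Rightarrow> b | None \<Rightarrow> R i j))
      in (s', u', R'))"

definition state_phase1 where
  "state_phase1 n t Y D win adv1 advS1 =
     (succ1 n t Y D win adv1, link1 Y D win adv1, rec1 n t Y D win adv1 advS1)"

text \<open>Updated message w^(i) at the end of Phase 3 (None = phi). The decision of the
  binary Byzantine agreement is d; decision 0 sets all updated messages to phi.\<close>
definition cool_updated_msg ::
  "nat \<Rightarrow> nat \<Rightarrow> (bool list \<Rightarrow> nat \<Rightarrow> 'f) \<Rightarrow> nat set \<Rightarrow> (nat \<Rightarrow> bool list)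
   \<Rightarrow> (nat \<Rightarrow> nat \<Rightarrow> 'f \<times> 'f) \<Rightarrow> (nat \<Rightarrow> nat \<Rightarrow> bool)
   \<Rightarrow> (nat \<Rightarrow> nat \<Rightarrow> bool option) \<Rightarrow> (nat \<Rightarrow> nat \<Rightarrow> bool option) \<Rightarrow> bool
   \<Rightarrow> nat \<Rightarrow> bool list option" where
  "cool_updated_msg n t Y D win adv1 advS1 advS2 advS3 d i =
     (let st = phase2_step n t D advS3 (phase2_step n t D advS2 (state_phase1 n t Y D win adv1 advS1))
      in if d \<and> fst st i then Some (win i) else None)"

end

theory Submission
  imports Defs "HOL-Computational_Algebra.Polynomial"
begin

text \<open>The symbol y_j of a message is the value at the point j of the polynomial of degree < k
  interpolating the k blocks of the message, so the codewords of two different messages agree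
  in at most k - 1 = t div 5 positions.  If honest i and j are linked, then j's own symbol is a
  position where the codewords of i and j agree; hence honest processors holding different
  messages have at most t div 5 common honest links.  A processor that survives Phase 1 has
  at least n - 2t > t honest links, so counting rules out three distinct messages among the
  survivors, and one of two message groups has fewer than n - 2t members.  In Phase 2 every
  survivor of that small group must then link to the other group, which makes it an agreement
  position itself; so all Phase 2 links of a member of the small group are agreement positions,
  and there are too few of them to survive Phase 3.\<close>

section \<open>Agreement of Reed--Solomon codewords\<close>

definition lagrange_basis :: "(nat \<Rightarrow> 'f::field) \<Rightarrow> nat \<Rightarrow> nat \<Rightarrow> 'f poly" where
  "lagrange_basis pt k q = (\<Prod>p\<in>{1..k} - {q}. smult (1 / (pt q - pt p)) [:- pt p, 1:])"

definition lagrange_interp :: "(nat \<Rightarrow> 'f::field) \<Rightarrow> nat \<Rightarrow> (nat \<Rightarrow> 'f) \<Rightarrow> 'f poly" where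
  "lagrange_interp pt k a = (\<Sum>q\<in>{1..k}. smult (a q) (lagrange_basis pt k q))"

lemma poly_lagrange_basis:
  "poly (lagrange_basis pt k q) x = (\<Prod>p\<in>{1..k} - {q}. (x - pt p) / (pt q - pt p))"
  unfolding lagrange_basis_def poly_prod by (intro prod.cong refl) (simp add: diff_divide_distrib)

lemma degree_lagrange_basis:
  assumes "q \<in> {1..k}"
  shows "degree (lagrange_basis pt k q) \<le> k - 1"
proof -
  have "degree (lagrange_basis pt k q)
      \<le> sum (degree \<circ> (\<lambda>p. smult (1 / (pt q - pt p)) [:- pt p, 1:])) ({1..k} - {q})"
    unfolding lagrange_basis_def by (rule degree_prod_sum_le) simp
  also have "\<dots> \<le> (\<Sum>p\<in>{1..k} - {q}. 1)"
    by (intro sum_mono) (simp add: degree_smult_le)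
  also have "\<dots> = k - 1"
    using assms by simp
  finally show ?thesis .
qed

lemma poly_lagrange_basis_node:
  assumes "inj_on pt {1..k}" and "q \<in> {1..k}" and "q' \<in> {1..k}"
  shows "poly (lagrange_basis pt k q) (pt q') = (if q' = q then 1 else 0)"
proof (cases "q' = q")
  case True
  have "pt q - pt p \<noteq> 0" if "p \<in> {1..k} - {q}" for p
    using assms that by (auto dest: inj_onD)
  then show ?thesis
    using True by (auto simp: poly_lagrange_basis intro!: prod.neutral)
next
  case False
  then have "q' \<in> {1..k} - {q}"
    using assms by auto
  then show ?thesis
    using False by (auto simp: poly_lagrange_basis intro!: prod_zero bexI[of _ q'])
qed

lemma degree_lagrange_interp: "degree (lagrange_interp pt k a) \<le> k - 1"
  unfolding lagrange_interp_def
  by (intro degree_sum_le order.trans[OF degree_smult_le] degree_lagrange_basis) auto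

lemma poly_lagrange_interp_node:
  assumes "inj_on pt {1..k}" and "q \<in> {1..k}"
  shows "poly (lagrange_interp pt k a) (pt q) = a q"
proof -
  have "poly (lagrange_interp pt k a) (pt q) = (\<Sum>q'\<in>{1..k}. a q' * (if q = q' then 1 else 0))"
    unfolding lagrange_interp_def poly_sum poly_smult
    using assms by (intro sum.cong refl) (simp add: poly_lagrange_basis_node)
  also have "\<dots> = a q"
    using assms(2) by (simp add: if_distrib[of "(*) _"] sum.delta cong: if_cong)
  finally show ?thesis .
qed

lemma card_lagrange_interp_agree_le:
  assumes inj: "inj_on pt {1..k}" and q: "q \<in> {1..k}" "a q \<noteq> b q"
    and agree: "\<And>x. x \<in> A \<Longrightarrow> poly (lagrange_interp pt k a) x = poly (lagrange_interp pt k b) x"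
  shows "card A \<le> k - 1"
proof (rule ccontr)
  assume "\<not> card A \<le> k - 1"
  then have "lagrange_interp pt k a = lagrange_interp pt k b"
    using degree_lagrange_interp[of pt k a] degree_lagrange_interp[of pt k b]
    by (intro poly_eqI_degree[OF agree]) auto
  then show False
    using poly_lagrange_interp_node[OF inj q(1)] q(2) by metis
qed

lemma ycode_eq_poly_lagrange_interp:
  "ycode pt beta k c l w j = poly (lagrange_interp pt k (encode beta k c l w)) (pt j)"
  unfolding ycode_def lagrange_interp_def poly_sum poly_smult
  by (intro sum.cong refl) (simp only: hcoef_def poly_lagrange_basis mult.commute)

lemma list_eq_if_chunks_eq:
  assumes "length U = k * c" and "length V = k * c"
    and "\<And>q. q < k \<Longrightarrow> take c (drop (q * c) U) = take c (drop (q * c) V)"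
  shows "U = V"
  using assms
proof (induction k arbitrary: U V)
  case 0
  then show ?case by simp
next
  case (Suc k)
  have "take c U = take c V"
    using Suc.prems(3)[of 0] by simp
  moreover have "drop c U = drop c V"
  proof (rule Suc.IH)
    show "length (drop c U) = k * c" and "length (drop c V) = k * c"
      using Suc.prems(1,2) by simp_all
    fix q assume "q < k"
    then show "take c (drop (q * c) (drop c U)) = take c (drop (q * c) (drop c V))"
      using Suc.prems(3)[of "Suc q"] by (simp add: drop_drop add.commute)
  qed
  ultimately show ?case
    by (metis append_take_drop_id)
qed

lemma encode_inj:
  assumes beta: "inj_on beta {xs. length xs = c}"
    and "length u = l" and "length v = l" and "l \<le> k * c"
    and encode_eq: "\<And>q. q \<in> {1..k} \<Longrightarrow> encode beta k c l u q = encode beta k c l v q"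
  shows "u = v"
proof -
  define pad where "pad w = w @ replicate (k * c - l) False" for w :: "bool list"
  have "pad u = pad v"
  proof (rule list_eq_if_chunks_eq)
    show "length (pad u) = k * c" and "length (pad v) = k * c"
      using assms by (auto simp: pad_def)
    fix q assume "q < k"
    then have "q * c + c \<le> k * c"
      by (metis add.commute mult_Suc less_eq_Suc_le mult_le_mono1)
    then have "length (take c (drop (q * c) (pad w))) = c" if "length w = l" for w
      using that assms(4) by (simp add: pad_def)
    moreover have "beta (take c (drop (q * c) (pad u))) = beta (take c (drop (q * c) (pad v)))"
      using encode_eq[of "Suc q"] \<open>q < k\<close> by (simp add: encode_def pad_def)
    ultimately show "take c (drop (q * c) (pad u)) = take c (drop (q * c) (pad v))"
      using beta assms(2,3) by (auto dest: inj_onD)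
  qed
  then have "take l (pad u) = take l (pad v)"
    by simp
  then show ?thesis
    using assms(2,3) by (simp add: pad_def)
qed

lemma card_ycode_agree_le:
  fixes pt :: "nat \<Rightarrow> 'f::field"
  assumes "bij_betw beta {xs. length xs = c} UNIV"
    and "length u = l" and "length v = l" and "l \<le> k * c"
    and "inj_on pt {1..n}" and "k \<le> n" and "u \<noteq> v"
  shows "card {e \<in> {1..n}. ycode pt beta k c l u e = ycode pt beta k c l v e} \<le> k - 1"
proof -
  obtain q where q: "q \<in> {1..k}" "encode beta k c l u q \<noteq> encode beta k c l v q"
    using encode_inj[OF bij_betw_imp_inj_on] assms by blast
  have inj_k: "inj_on pt {1..k}"
    using assms(5,6) by (auto intro: inj_on_subset)
  have "card (pt ` {e \<in> {1..n}. ycode pt beta k c l u e = ycode pt beta k c l v e}) \<le> k - 1"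
    by (rule card_lagrange_interp_agree_le[OF inj_k q(1), where a = "encode beta k c l u"
          and b = "encode beta k c l v", OF q(2)])
      (auto simp: ycode_eq_poly_lagrange_interp)
  moreover have "inj_on pt {e \<in> {1..n}. ycode pt beta k c l u e = ycode pt beta k c l v e}"
    using assms(5) by (rule inj_on_subset) auto
  ultimately show ?thesis
    by (simp add: card_image)
qed

section \<open>Counting in the honest link graph\<close>

lemma card_add3_le_Un_Int:
  assumes "finite A" "finite B" "finite C"
  shows "card A + card B + card C
    \<le> card (A \<union> B \<union> C) + card (A \<inter> B) + card (A \<inter> C) + card (B \<inter> C)"
proof -
  have "card A + card B = card (A \<union> B) + card (A \<inter> B)"
    using assms by (intro card_Un_Int)
  moreover have "card (A \<union> B) + card C = card (A \<union> B \<union> C) + card ((A \<union> B) \<inter> C)"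
    using assms by (intro card_Un_Int) auto
  moreover have "card ((A \<union> B) \<inter> C) \<le> card (A \<inter> C) + card (B \<inter> C)"
    by (simp add: Int_Un_distrib2 card_Un_le)
  ultimately show ?thesis
    by linarith
qed

text \<open>The honest part of a COOL execution: S1, S2, S3 are the honest processors still
  successful after Phases 1, 2, 3, L is the Phase 1 link relation, w assigns the messages, and
  agree a b is the set of positions where the codewords of a and b coincide.\<close>

locale link_graph =
  fixes H S1 S2 S3 :: "'p set" and L :: "'p \<Rightarrow> 'p \<Rightarrow> bool" and w :: "'p \<Rightarrow> 'm"
    and agree :: "'m \<Rightarrow> 'm \<Rightarrow> 'p set" and m t K :: nat
  assumes finite_H: "finite H" and card_H: "card H \<le> m + t"
    and S1_sub: "S1 \<subseteq> H" and S2_sub: "S2 \<subseteq> S1" and S3_sub: "S3 \<subseteq> S2"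
    and link_refl: "x \<in> H \<Longrightarrow> L x x"
    and link_sym: "x \<in> H \<Longrightarrow> y \<in> H \<Longrightarrow> L x y \<Longrightarrow> L y x"
    and common_link_agree: "x \<in> H \<Longrightarrow> y \<in> H \<Longrightarrow> e \<in> H \<Longrightarrow> w x \<noteq> w y \<Longrightarrow>
      L x e \<Longrightarrow> L y e \<Longrightarrow> e \<in> agree (w x) (w y)"
    and card_agree: "x \<in> H \<Longrightarrow> y \<in> H \<Longrightarrow> w x \<noteq> w y \<Longrightarrow> card (agree (w x) (w y) \<inter> H) \<le> K"
    and degree_S1: "x \<in> S1 \<Longrightarrow> m \<le> card {j \<in> H. L x j}"
    and degree_S2: "x \<in> S2 \<Longrightarrow> m \<le> card {j \<in> S1. L x j}"
    and degree_S3: "x \<in> S3 \<Longrightarrow> m \<le> card {j \<in> S2. L x j}"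
    and t_less_m: "t < m" and K_le: "3 * K \<le> t + 1"
begin

lemma finite_S1: "finite S1"
  using finite_H S1_sub by (rule finite_subset[rotated])

lemma card_common_links_le:
  assumes "x \<in> H" "y \<in> H" "w x \<noteq> w y"
  shows "card ({j \<in> H. L x j} \<inter> {j \<in> H. L y j}) \<le> K"
proof -
  have "{j \<in> H. L x j} \<inter> {j \<in> H. L y j} \<subseteq> agree (w x) (w y) \<inter> H"
    using common_link_agree assms by blast
  then have "card ({j \<in> H. L x j} \<inter> {j \<in> H. L y j}) \<le> card (agree (w x) (w y) \<inter> H)"
    using finite_H by (intro card_mono) auto
  then show ?thesis
    using card_agree assms by (meson order_trans)
qed

lemma at_most_two_messages:
  assumes "x \<in> S1" "y \<in> S1" "z \<in> S1" "w x \<noteq> w y"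
  shows "w z = w x \<or> w z = w y"
proof (rule ccontr)
  assume "\<not> (w z = w x \<or> w z = w y)"
  then have distinct: "w x \<noteq> w y" "w x \<noteq> w z" "w y \<noteq> w z"
    using assms(4) by auto
  let ?N = "\<lambda>x. {j \<in> H. L x j}"
  have H: "x \<in> H" "y \<in> H" "z \<in> H"
    using assms S1_sub by auto
  have "card (?N x) + card (?N y) + card (?N z) \<le> card (?N x \<union> ?N y \<union> ?N z)
      + card (?N x \<inter> ?N y) + card (?N x \<inter> ?N z) + card (?N y \<inter> ?N z)"
    using finite_H by (intro card_add3_le_Un_Int) auto
  moreover have "card (?N x \<union> ?N y \<union> ?N z) \<le> card H"
    using finite_H by (intro card_mono) auto
  moreover have "card (?N x \<inter> ?N y) \<le> K" "card (?N x \<inter> ?N z) \<le> K" "card (?N y \<inter> ?N z) \<le> K"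
    using card_common_links_le H distinct by auto
  moreover have "m \<le> card (?N x)" "m \<le> card (?N y)" "m \<le> card (?N z)"
    using degree_S1 assms by auto
  ultimately show False
    using card_H t_less_m K_le by linarith
qed

text \<open>If the group of y in S1 had fewer than m members, every member z of that group in S2
  would link to a member of the other group, which makes z itself a point where the two
  codewords agree; then all S2-links of y would be such points, too few for y to reach S3.\<close>

lemma card_message_group_ge:
  assumes x: "x \<in> S3" and y: "y \<in> S3" and xy: "w x \<noteq> w y"
  shows "m \<le> card {j \<in> S1. w j = w y}"
proof (rule ccontr)
  assume small: "\<not> m \<le> card {j \<in> S1. w j = w y}"
  let ?E = "agree (w x) (w y) \<inter> H"
  have "x \<in> S1" "y \<in> S1" and yH: "y \<in> H"
    using x y S1_sub S2_sub S3_sub by auto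
  then have other_group: "w j = w x" if "j \<in> S1" "w j \<noteq> w y" for j
    using at_most_two_messages xy that by blast
  have group_in_E: "z \<in> ?E" if z: "z \<in> S2" "w z = w y" for z
  proof (rule ccontr)
    assume z_notin: "z \<notin> ?E"
    have zH: "z \<in> H"
      using z S1_sub S2_sub by auto
    have "{j \<in> S1. L z j} \<subseteq> {j \<in> S1. w j = w y}"
    proof safe
      fix j assume j: "j \<in> S1" "L z j"
      show "w j = w y"
      proof (rule ccontr)
        assume "w j \<noteq> w y"
        moreover have "j \<in> H"
          using j S1_sub by auto
        ultimately have "z \<in> agree (w j) (w z)"
          using common_link_agree[of j z z] link_refl[OF zH] link_sym[OF zH _ j(2)] zH z(2) by auto
        then show False
          using z_notin zH z(2) other_group[OF j(1) \<open>w j \<noteq> w y\<close>] by auto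
      qed
    qed
    then have "card {j \<in> S1. L z j} \<le> card {j \<in> S1. w j = w y}"
      using finite_S1 by (intro card_mono) auto
    then show False
      using degree_S2 z small by fastforce
  qed
  have "{j \<in> S2. L y j} \<subseteq> ?E"
  proof
    fix j assume j: "j \<in> {j \<in> S2. L y j}"
    then have jH: "j \<in> H"
      using S1_sub S2_sub by auto
    show "j \<in> ?E"
    proof (cases "w j = w y")
      case True
      then show ?thesis
        using group_in_E j by blast
    next
      case False
      then have "w j = w x"
        using other_group j S2_sub by blast
      then show ?thesis
        using common_link_agree[of j y j] jH yH j link_refl False by auto
    qed
  qed
  then have "card {j \<in> S2. L y j} \<le> card ?E"
    using finite_H by (intro card_mono) auto
  moreover have "card ?E \<le> K"
    using card_agree \<open>x \<in> S1\<close> yH xy S1_sub by blast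
  ultimately show False
    using degree_S3 y t_less_m K_le by fastforce
qed

theorem success3_same_message:
  assumes "x \<in> S3" "y \<in> S3"
  shows "w x = w y"
proof (rule ccontr)
  assume xy: "w x \<noteq> w y"
  have "x \<in> S1" "y \<in> S1"
    using assms S2_sub S3_sub by auto
  then have "S1 = {j \<in> S1. w j = w x} \<union> {j \<in> S1. w j = w y}"
    using at_most_two_messages xy by blast
  also have "card \<dots> = card {j \<in> S1. w j = w x} + card {j \<in> S1. w j = w y}"
    using finite_S1 xy by (intro card_Un_disjoint) auto
  finally have "card S1 = card {j \<in> S1. w j = w x} + card {j \<in> S1. w j = w y}" .
  moreover have "card S1 \<le> card H"
    using S1_sub finite_H by (rule card_mono[rotated])
  moreover have "m \<le> card {j \<in> S1. w j = w x}" "m \<le> card {j \<in> S1. w j = w y}"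
    using card_message_group_ge assms xy by metis+
  ultimately show False
    using card_H t_less_m by linarith
qed

end

section \<open>Executions of COOL\<close>

lemma card_honest_ge:
  assumes "D \<subseteq> {1..n}" and "n - t \<le> card {j \<in> {1..n}. P j}"
  shows "n - t - card D \<le> card {j \<in> {1..n} - D. P j}"
proof -
  have "card {j \<in> {1..n}. P j} \<le> card ({j \<in> {1..n} - D. P j} \<union> D)"
    using assms(1) by (intro card_mono) (auto intro: finite_subset)
  also have "\<dots> \<le> card {j \<in> {1..n} - D. P j} + card D"
    by (rule card_Un_le)
  finally show ?thesis
    using assms(2) by linarith
qed

lemma phase2_step_success:
  "fst (phase2_step n t D advS (s, u, R)) i \<longleftrightarrow> s i \<and> n - t \<le> card {j \<in> {1..n}. u i j \<and> R i j}"
  by (cases "s i") (simp_all add: phase2_step_def Let_def)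

lemma phase2_step_links:
  "s i \<Longrightarrow> fst (snd (phase2_step n t D advS (s, u, R))) i j \<longleftrightarrow> u i j \<and> R i j"
  by (simp add: phase2_step_def Let_def)

text \<open>Honest processors broadcast every change of their indicator, so records of honest
  indicators stay exact.\<close>

lemma phase2_step_records:
  assumes "\<And>j. j \<notin> D \<Longrightarrow> R i j = s j" and "j \<notin> D"
  shows "snd (snd (phase2_step n t D advS (s, u, R))) i j = fst (phase2_step n t D advS (s, u, R)) j"
  using assms by (auto simp: phase2_step_def Let_def)

lemma card_honest_support_ge:
  assumes "D \<subseteq> {1..n}" and "\<And>j. j \<notin> D \<Longrightarrow> R i j = s j"
    and "fst (phase2_step n t D advS (s, u, R)) i"
  shows "n - t - card D \<le> card {j \<in> {1..n} - D. s j \<and> u i j}"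
proof -
  have "n - t \<le> card {j \<in> {1..n}. u i j \<and> R i j}"
    using assms(3) by (simp add: phase2_step_success)
  then have "n - t - card D \<le> card {j \<in> {1..n} - D. u i j \<and> R i j}"
    by (rule card_honest_ge[OF assms(1)])
  also have "{j \<in> {1..n} - D. u i j \<and> R i j} = {j \<in> {1..n} - D. s j \<and> u i j}"
    using assms(2) by auto
  finally show ?thesis .
qed

lemma link1_honest_codeword:
  assumes "i \<notin> D" and "j \<notin> D" and "link1 Y D win adv1 i j"
  shows "Y (win i) j = Y (win j) j"
  using assms by (auto simp: link1_def p1_pair_def)

lemma link1_honest_sym:
  assumes "i \<notin> D" and "j \<notin> D" and "link1 Y D win adv1 i j"
  shows "link1 Y D win adv1 j i"
  using assms by (auto simp: link1_def p1_pair_def)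

locale cool_execution =
  fixes n t :: nat and Y :: "bool list \<Rightarrow> nat \<Rightarrow> 'f" and D :: "nat set"
    and win :: "nat \<Rightarrow> bool list" and adv1 :: "nat \<Rightarrow> nat \<Rightarrow> 'f \<times> 'f"
    and advS1 :: "nat \<Rightarrow> nat \<Rightarrow> bool" and advS2 advS3 :: "nat \<Rightarrow> nat \<Rightarrow> bool option"
  assumes D_sub: "D \<subseteq> {1..n}" and card_D: "card D \<le> t" and n_ge: "3 * t + 1 \<le> n"
    and card_codeword_agree: "x \<in> {1..n} - D \<Longrightarrow> y \<in> {1..n} - D \<Longrightarrow> win x \<noteq> win y \<Longrightarrow>
      card {e \<in> {1..n} - D. Y (win x) e = Y (win y) e} \<le> t div 5"
begin

abbreviation honest :: "nat set" where
  "honest \<equiv> {1..n} - D"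

abbreviation link :: "nat \<Rightarrow> nat \<Rightarrow> bool" where
  "link \<equiv> link1 Y D win adv1"

definition state1 :: cool_state where
  "state1 = state_phase1 n t Y D win adv1 advS1"

definition state2 :: cool_state where
  "state2 = phase2_step n t D advS2 state1"

definition state3 :: cool_state where
  "state3 = phase2_step n t D advS3 state2"

definition successful :: "cool_state \<Rightarrow> nat set" where
  "successful st = {i \<in> honest. fst st i}"

lemma state1_records: "j \<notin> D \<Longrightarrow> snd (snd state1) i j = fst state1 j"
  by (simp add: state1_def state_phase1_def rec1_def)

lemma state2_records: "j \<notin> D \<Longrightarrow> snd (snd state2) i j = fst state2 j"
  unfolding state2_def using state1_records
  by (cases state1) (simp add: phase2_step_records)

lemma successful_state2_sub: "successful state2 \<subseteq> successful state1"
  by (cases state1) (auto simp: successful_def state2_def phase2_step_success)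

lemma successful_state3_sub: "successful state3 \<subseteq> successful state2"
  by (cases state2) (auto simp: successful_def state3_def phase2_step_success)

lemma card_links_state1:
  assumes "x \<in> successful state1"
  shows "n - t - card D \<le> card {j \<in> honest. link x j}"
proof (rule card_honest_ge[OF D_sub])
  show "n - t \<le> card {j \<in> {1..n}. link x j}"
    using assms by (simp add: successful_def state1_def state_phase1_def succ1_def)
qed

lemma card_links_state2:
  assumes "x \<in> successful state2"
  shows "n - t - card D \<le> card {j \<in> successful state1. link x j}"
proof -
  have "n - t - card D \<le> card {j \<in> honest. succ1 n t Y D win adv1 j \<and> link x j}"
  proof (rule card_honest_support_ge[OF D_sub])
    show "rec1 n t Y D win adv1 advS1 x j = succ1 n t Y D win adv1 j" if "j \<notin> D" for j
      using that by (simp add: rec1_def)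
    show "fst (phase2_step n t D advS2
        (succ1 n t Y D win adv1, link, rec1 n t Y D win adv1 advS1)) x"
      using assms by (simp add: successful_def state2_def state1_def state_phase1_def)
  qed
  then show ?thesis
    by (simp add: successful_def state1_def state_phase1_def conj_ac)
qed

lemma state2_links:
  assumes "x \<in> successful state1" and "j \<notin> D"
  shows "fst (snd state2) x j \<longleftrightarrow> link x j \<and> fst state1 j"
  using assms
  by (simp add: successful_def state2_def state1_def state_phase1_def phase2_step_links rec1_def)

lemma card_links_state3:
  assumes "x \<in> successful state3"
  shows "n - t - card D \<le> card {j \<in> successful state2. link x j}"
proof -
  obtain s u R where state2: "state2 = (s, u, R)"
    by (cases state2)
  have "n - t - card D \<le> card {j \<in> honest. s j \<and> u x j}"
  proof (rule card_honest_support_ge[OF D_sub])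
    show "R x j = s j" if "j \<notin> D" for j
      using state2_records[OF that] state2 by simp
    show "fst (phase2_step n t D advS3 (s, u, R)) x"
      using assms state2 by (simp add: successful_def state3_def)
  qed
  also have "{j \<in> honest. s j \<and> u x j} = {j \<in> successful state2. link x j}"
  proof -
    have "x \<in> successful state1"
      using assms successful_state2_sub successful_state3_sub by blast
    then show ?thesis
      using state2_links[of x] successful_state2_sub state2 by (auto simp: successful_def)
  qed
  finally show ?thesis .
qed

sublocale link_graph honest "successful state1" "successful state2" "successful state3" link win
  "\<lambda>a b. {e. Y a e = Y b e}" "n - t - card D" t "t div 5"
proof
  show "card honest \<le> n - t - card D + t"
    using D_sub card_D n_ge by (simp add: card_Diff_subset finite_subset)
  show "successful state1 \<subseteq> honest"
    by (auto simp: successful_def)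
  show "link x x" for x
    by (simp add: link1_def)
  show "link y x" if "x \<in> honest" "y \<in> honest" "link x y" for x y
    using that link1_honest_sym by blast
  show "e \<in> {e. Y (win x) e = Y (win y) e}"
    if "x \<in> honest" "y \<in> honest" "e \<in> honest" "link x e" "link y e" for x y e
    using that link1_honest_codeword[of x D e Y win adv1] link1_honest_codeword[of y D e Y win adv1]
    by simp
  show "card ({e. Y (win x) e = Y (win y) e} \<inter> honest) \<le> t div 5"
    if "x \<in> honest" "y \<in> honest" "win x \<noteq> win y" for x y
  proof -
    have "{e. Y (win x) e = Y (win y) e} \<inter> honest = {e \<in> honest. Y (win x) e = Y (win y) e}"
      by blast
    then show ?thesis
      using card_codeword_agree[OF that] by simp
  qed
  show "t < n - t - card D"
    using card_D n_ge by linarith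
  show "3 * (t div 5) \<le> t + 1"
    by simp
qed (use successful_state2_sub successful_state3_sub card_links_state1 card_links_state2
      card_links_state3 in auto)

lemma cool_updated_msg_eq:
  "cool_updated_msg n t Y D win adv1 advS1 advS2 advS3 d i
     = (if d \<and> fst state3 i then Some (win i) else None)"
  by (simp only: cool_updated_msg_def Let_def state3_def state2_def state1_def)

theorem updated_msgs_single_value:
  "\<exists>M \<in> insert M0 (win ` honest). \<forall>i \<in> honest.
     cool_updated_msg n t Y D win adv1 advS1 advS2 advS3 d i \<in> {Some M, None}"
proof (cases "successful state3 = {}")
  case True
  then have "cool_updated_msg n t Y D win adv1 advS1 advS2 advS3 d i = None" if "i \<in> honest" for i
    using that by (auto simp: cool_updated_msg_eq successful_def)
  then show ?thesis
    by blast
next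
  case False
  then obtain i where i: "i \<in> successful state3"
    by blast
  show ?thesis
  proof (rule bexI[of _ "win i"])
    show "win i \<in> insert M0 (win ` honest)"
      using i by (simp add: successful_def)
    have "win j = win i" if "j \<in> successful state3" for j
      using that i success3_same_message by blast
    then show "\<forall>j \<in> honest. cool_updated_msg n t Y D win adv1 advS1 advS2 advS3 d j
        \<in> {Some (win i), None}"
      by (simp add: cool_updated_msg_eq successful_def)
  qed
qed

end

lemma cool_msg_length_le: "l \<le> cool_k t * cool_c n t l"
proof -
  define X where "X = max (real l) ((real t / 5 + 1) * log 2 (real (n + 1))) / real (cool_k t)"
  have k_pos: "real (cool_k t) > 0"
    by (simp add: cool_k_def)
  have "real l / real (cool_k t) \<le> X"
    unfolding X_def using k_pos by (intro divide_right_mono) auto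
  also have "X \<le> real (cool_c n t l)"
    unfolding cool_c_def X_def[symmetric] by linarith
  finally have "real l \<le> real (cool_k t) * real (cool_c n t l)"
    using k_pos by (simp add: field_simps)
  then show ?thesis
    by (simp flip: of_nat_mult)
qed

lemma cool_execution_ycode:
  fixes pt :: "nat \<Rightarrow> 'f::field"
  assumes "3 * t + 1 \<le> n" and "inj_on pt {1..n}"
    and "bij_betw beta {xs. length xs = cool_c n t l} UNIV"
    and "D \<subseteq> {1..n}" and "card D \<le> t" and "\<forall>i\<in>{1..n}. length (win i) = l"
  shows "cool_execution n t (ycode pt beta (cool_k t) (cool_c n t l) l) D win"
proof
  let ?Y = "ycode pt beta (cool_k t) (cool_c n t l) l"
  fix x y assume "x \<in> {1..n} - D" and "y \<in> {1..n} - D" and "win x \<noteq> win y"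
  then have "card {e \<in> {1..n}. ?Y (win x) e = ?Y (win y) e} \<le> cool_k t - 1"
    using assms(1,2,6) cool_msg_length_le
    by (intro card_ycode_agree_le[OF assms(3)]) (auto simp: cool_k_def)
  then have "card {e \<in> {1..n}. ?Y (win x) e = ?Y (win y) e} \<le> t div 5"
    by (simp add: cool_k_def)
  then show "card {e \<in> {1..n} - D. ?Y (win x) e = ?Y (win y) e} \<le> t div 5"
    by (rule order_trans[rotated]) (auto intro: card_mono)
qed (use assms in auto)

theorem lemma3:
  fixes pt :: "nat \<Rightarrow> 'f::{field,finite}"
    and beta :: "bool list \<Rightarrow> 'f"
    and n t l :: nat
    and D :: "nat set"
    and win :: "nat \<Rightarrow> bool list"
    and adv1 :: "nat \<Rightarrow> nat \<Rightarrow> 'f \<times> 'f"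
    and advS1 :: "nat \<Rightarrow> nat \<Rightarrow> bool"
    and advS2 advS3 :: "nat \<Rightarrow> nat \<Rightarrow> bool option"
    and d :: bool
  assumes "n \<ge> 3 * t + 1"
    and "card (UNIV :: 'f set) = 2 ^ cool_c n t l"
    and "inj_on pt {1..n}"
    and "\<forall>i\<in>{1..n}. pt i \<noteq> 0"
    and "bij_betw beta {xs. length xs = cool_c n t l} UNIV"
    and "D \<subseteq> {1..n}"
    and "card D \<le> t"
    and "\<forall>i\<in>{1..n}. length (win i) = l"
  shows "\<exists>M. length M = l \<and>
           (\<forall>i\<in>{1..n} - D.
              cool_updated_msg n t (ycode pt beta (cool_k t) (cool_c n t l) l) D win
                 adv1 advS1 advS2 advS3 d i \<in> {Some M, None})"
proof -
  interpret cool_execution n t "ycode pt beta (cool_k t) (cool_c n t l) l" D win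
    adv1 advS1 advS2 advS3
    using assms by (intro cool_execution_ycode) auto
  obtain M where M: "M \<in> insert (replicate l False) (win ` ({1..n} - D))"
    and "\<forall>i\<in>{1..n} - D. cool_updated_msg n t (ycode pt beta (cool_k t) (cool_c n t l) l) D win
                 adv1 advS1 advS2 advS3 d i \<in> {Some M, None}"
    using updated_msgs_single_value by blast
  moreover have "length M = l"
    using M assms(8) by auto
  ultimately show ?thesis
    by blast
qed

end
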